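(* Let $K\subseteq\mathbb R^d$ be a non-empty compact set which is the closure of its interior. The Fourier transform, considered as a mapping from $(\mathcal M^\infty(\mathbb R^d),\|\cdot\|_K)$ to $\mathcal S'(\mathbb R^d)$ (with the tempered distribution topology), is continuous; that is, if $\mu_n,\mu\in\mathcal M^\infty(\mathbb R^d)$ with $\|\mu_n-\mu\|_K\to0$, then the distributional Fourier transforms $\widehat{\mu_n}$ converge to $\widehat\mu$ in $\mathcal S'(\mathbb R^d)$.
   Context: $\mathcal M^\infty(\mathbb R^d)$ is the space of translation bounded (complex Radon) measures on $\mathbb R^d$, i.e. measures with $\|\mu\|_K:=\sup_{t\in\mathbb R^d}|\mu|(t+K)<\infty$ for all compact $K$, where $|\mu|$ is the total variation; such measures are tempered distributions, and their Fourier transform is taken in the sense of tempered distributions. Convergence in $\mathcal S'(\mathbb R^d)$ means pointwise convergence on every Schwartz function. *)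

theory Defs
  imports "HOL-Analysis.Analysis"
begin

fun dirderivs :: "'a::euclidean_space list \<Rightarrow> ('a \<Rightarrow> complex) \<Rightarrow> ('a \<Rightarrow> complex)" where
  "dirderivs [] f = f"
| "dirderivs (v # vs) f = (\<lambda>x. frechet_derivative (dirderivs vs f) (at x) v)"

definition schwartz :: "('a::euclidean_space \<Rightarrow> complex) \<Rightarrow> bool" where
  "schwartz \<phi> \<longleftrightarrow>
     (\<forall>vs. set vs \<subseteq> Basis \<longrightarrow> (\<forall>x. dirderivs vs \<phi> differentiable at x)) \<and>
     (\<forall>vs (k::nat). set vs \<subseteq> Basis \<longrightarrow>
        (\<exists>C. \<forall>x. norm x ^ k * norm (dirderivs vs \<phi> x) \<le> C))"

definition fourier :: "('a::euclidean_space \<Rightarrow> complex) \<Rightarrow> 'a \<Rightarrow> complex" where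
  "fourier \<phi> \<xi> = integral\<^sup>L lborel (\<lambda>x. cis (- 2 * pi * (x \<bullet> \<xi>)) * \<phi> x)"

text \<open>A complex Radon measure is represented as
  \<open>\<mu> = (\<mu>\<^sub>1 - \<mu>\<^sub>2) + i (\<mu>\<^sub>3 - \<mu>\<^sub>4)\<close> with four positive Borel measures.\<close>
record 'a cmeasure =
  cm_rp :: "'a measure"
  cm_rn :: "'a measure"
  cm_ip :: "'a measure"
  cm_in :: "'a measure"

definition translation_bounded_pos :: "'a::euclidean_space measure \<Rightarrow> bool" where
  "translation_bounded_pos M \<longleftrightarrow> sets M = sets borel \<and>
     (\<forall>K. compact K \<longrightarrow> (SUP t. emeasure M ((+) t ` K)) < \<infinity>)"

text \<open>Membership in \<open>\<M>\<^sup>\<infinity>\<close>: each of the four positive parts is a translation bounded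
  Borel measure (every translation bounded complex Radon measure admits such a
  representation, e.g. via the Jordan decompositions of its real and imaginary parts).\<close>
definition Minf :: "'a::euclidean_space cmeasure \<Rightarrow> bool" where
  "Minf \<mu> \<longleftrightarrow> translation_bounded_pos (cm_rp \<mu>) \<and> translation_bounded_pos (cm_rn \<mu>) \<and>
              translation_bounded_pos (cm_ip \<mu>) \<and> translation_bounded_pos (cm_in \<mu>)"

definition cm_val :: "'a cmeasure \<Rightarrow> 'a set \<Rightarrow> complex" where
  "cm_val \<mu> A = complex_of_real (measure (cm_rp \<mu>) A - measure (cm_rn \<mu>) A)
               + \<i> * complex_of_real (measure (cm_ip \<mu>) A - measure (cm_in \<mu>) A)"

definition total_variation :: "('a::euclidean_space set \<Rightarrow> complex) \<Rightarrow> 'a set \<Rightarrow> ennreal" where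
  "total_variation \<nu> A = (SUP P \<in> {P. finite P \<and> P \<subseteq> sets borel \<and> disjoint P \<and> \<Union>P = A}.
                            ennreal (\<Sum>B\<in>P. cmod (\<nu> B)))"

definition K_norm :: "'a::euclidean_space set \<Rightarrow> ('a set \<Rightarrow> complex) \<Rightarrow> ennreal" where
  "K_norm K \<nu> = (SUP t. total_variation \<nu> ((+) t ` K))"

definition cm_integral :: "'a cmeasure \<Rightarrow> ('a \<Rightarrow> complex) \<Rightarrow> complex" where
  "cm_integral \<mu> f = (integral\<^sup>L (cm_rp \<mu>) f - integral\<^sup>L (cm_rn \<mu>) f)
                   + \<i> * (integral\<^sup>L (cm_ip \<mu>) f - integral\<^sup>L (cm_in \<mu>) f)"

text \<open>Distributional Fourier transform: \<open>\<langle>\<hat>\<mu>, \<phi>\<rangle> = \<langle>\<mu>, \<hat>\<phi>\<rangle>\<close>.\<close>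
definition ft_pair :: "'a::euclidean_space cmeasure \<Rightarrow> ('a \<Rightarrow> complex) \<Rightarrow> complex" where
  "ft_pair \<mu> \<phi> = cm_integral \<mu> (fourier \<phi>)"

end

theory Submission
  imports Defs
begin

text \<open>Let \<open>f\<close> be the Fourier transform of the Schwartz function \<open>\<phi>\<close>, so that
  \<open>\<bar>f \<xi>\<bar> \<le> A (1 + \<bar>\<xi>\<bar>)\<^sup>-\<^sup>N\<close> with \<open>N = d + 2\<close>, a weight that is integrable both for Lebesgue
  measure and for every translation bounded measure. Since \<open>K\<close> is the closure of its interior it
  contains a ball \<open>B(c\<^sub>0, r)\<close>. For \<open>\<nu> = \<mu>\<^sub>n - \<mu>\<close>, Fubini gives
  \<open>|B(0, r)| \<integral> f d\<nu> = \<integral> (\<integral>\<^bsub>B(t, r)\<^esub> f d\<nu>) dt\<close>. As \<open>B(t, r) \<subseteq> t - c\<^sub>0 + K\<close> and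
  \<open>\<bar>f\<bar> \<le> A (1 + r)\<^sup>N (1 + \<bar>t\<bar>)\<^sup>-\<^sup>N\<close> on \<open>B(t, r)\<close>, the inner integral is at most this bound
  times \<open>\<bar>\<nu>\<bar>(t - c\<^sub>0 + K) \<le> \<parallel>\<nu>\<parallel>\<^sub>K\<close> (approximate \<open>f\<close> by functions with finitely many
  values). Integrating over \<open>t\<close> yields \<open>\<bar>\<langle>\<hat>\<mu>\<^sub>n - \<hat>\<mu>, \<phi>\<rangle>\<bar> \<le> C \<parallel>\<mu>\<^sub>n - \<mu>\<parallel>\<^sub>K\<close>.\<close>

lemma one_plus_power_le:
  fixes t :: real
  assumes "t \<ge> 0"
  shows "(1 + t) ^ N \<le> 2 ^ N * (1 + t ^ N)"
proof -
  have "(1 + t) ^ N \<le> (2 * max 1 t) ^ N"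
    using assms by (intro power_mono) auto
  also have "\<dots> \<le> 2 ^ N * (1 + t ^ N)"
    using assms by (auto simp: power_mult_distrib max_def)
  finally show ?thesis .
qed

lemma one_plus_power_le_mult:
  fixes t \<beta> D :: real
  assumes "0 \<le> t" "t \<le> D * \<beta>" "1 \<le> D" "0 \<le> \<beta>"
  shows "(1 + t) ^ N \<le> (2 * D) ^ N * (1 + \<beta> ^ N)"
proof -
  have "(1 + t) ^ N \<le> (D * (1 + \<beta>)) ^ N"
    using assms by (intro power_mono) (auto simp: algebra_simps)
  also have "\<dots> \<le> D ^ N * (2 ^ N * (1 + \<beta> ^ N))"
    unfolding power_mult_distrib using assms by (intro mult_left_mono one_plus_power_le) auto
  finally show ?thesis
    by (simp add: power_mult_distrib mult_ac)
qed

lemma abs_diff_floor_le: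
  fixes a \<epsilon> :: real
  assumes "\<epsilon> > 0"
  shows "\<bar>a - \<epsilon> * of_int \<lfloor>a / \<epsilon>\<rfloor>\<bar> \<le> \<epsilon>"
proof -
  have "of_int \<lfloor>a / \<epsilon>\<rfloor> \<le> a / \<epsilon>" "a / \<epsilon> < of_int \<lfloor>a / \<epsilon>\<rfloor> + 1"
    by linarith+
  then have "\<epsilon> * of_int \<lfloor>a / \<epsilon>\<rfloor> \<le> \<epsilon> * (a / \<epsilon>)" "\<epsilon> * (a / \<epsilon>) < \<epsilon> * (of_int \<lfloor>a / \<epsilon>\<rfloor> + 1)"
    using assms by (simp_all only: mult_left_mono less_imp_le mult_strict_left_mono)
  then have "\<epsilon> * of_int \<lfloor>a / \<epsilon>\<rfloor> \<le> a" "a < \<epsilon> * of_int \<lfloor>a / \<epsilon>\<rfloor> + \<epsilon>"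
    using assms by (simp_all add: algebra_simps)
  then show ?thesis
    by linarith
qed

lemma norm_diff_le_norm_diff_add:
  fixes a b a' b' :: "'a::real_normed_vector"
  shows "norm (a - b) \<le> norm (a' - b') + norm (a - a') + norm (b - b')"
  using norm_triangle_ineq4[of "(a' - b') + (a - a')" "b - b'"] norm_triangle_ineq[of "a' - b'" "a - a'"]
  by (simp add: algebra_simps)

lemma le_of_forall_pos_le_add_mult:
  fixes x y z :: real
  assumes "\<And>\<epsilon>. \<epsilon> > 0 \<Longrightarrow> x \<le> y + \<epsilon> * z"
  shows "x \<le> y"
proof (rule field_le_epsilon)
  fix e :: real
  assume "e > 0"
  then have "e / (\<bar>z\<bar> + 1) > 0" "e / (\<bar>z\<bar> + 1) * z \<le> e"
    by (auto simp: field_simps) (smt (verit) mult_left_mono)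
  then show "x \<le> y + e"
    using assms[of "e / (\<bar>z\<bar> + 1)"] by linarith
qed

lemma has_vector_derivative_imp_quotient_LIMSEQ:
  assumes "(g has_vector_derivative v) (at 0)" "h \<longlonglongrightarrow> 0" "\<And>k. h k \<noteq> 0"
  shows "(\<lambda>k. (g (h k) - g 0) /\<^sub>R h k) \<longlonglongrightarrow> v"
proof -
  have "((\<lambda>y. ((g y - g 0) - y *\<^sub>R v) /\<^sub>R norm y) \<longlongrightarrow> 0) (at 0)"
    using assms(1) unfolding has_vector_derivative_def has_derivative_at_within by simp
  moreover have "filterlim h (at 0) sequentially"
    using assms(2,3) by (intro filterlim_atI) auto
  ultimately have "(\<lambda>k. ((g (h k) - g 0) - h k *\<^sub>R v) /\<^sub>R norm (h k)) \<longlonglongrightarrow> 0"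
    by (rule filterlim_compose)
  then have "(\<lambda>k. norm (((g (h k) - g 0) - h k *\<^sub>R v) /\<^sub>R norm (h k))) \<longlonglongrightarrow> 0"
    by (rule tendsto_norm_zero)
  moreover have "norm (((g (h k) - g 0) - h k *\<^sub>R v) /\<^sub>R norm (h k)) = norm ((g (h k) - g 0) /\<^sub>R h k - v)"
    for k
  proof -
    have "(g (h k) - g 0) /\<^sub>R h k - v = ((g (h k) - g 0) - h k *\<^sub>R v) /\<^sub>R h k"
      using assms(3)[of k] by (simp add: scaleR_diff_right)
    then show ?thesis by simp
  qed
  ultimately have "(\<lambda>k. (g (h k) - g 0) /\<^sub>R h k - v) \<longlonglongrightarrow> 0"
    by (simp add: tendsto_norm_zero_iff)
  then show ?thesis
    by (rule LIM_zero_cancel)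
qed

lemma has_vector_derivative_line:
  assumes "(\<phi> has_derivative D) (at (x + s *\<^sub>R b))"
  shows "((\<lambda>s. \<phi> (x + s *\<^sub>R b)) has_vector_derivative D b) (at s within S)"
proof -
  have "((\<lambda>s. x + s *\<^sub>R b) has_derivative (\<lambda>u. u *\<^sub>R b)) (at s within S)"
    by (auto intro!: derivative_eq_intros)
  from has_derivative_compose[OF this assms] show ?thesis
    unfolding has_vector_derivative_def
    using linear_simps(5)[OF has_derivative_bounded_linear[OF assms]] by simp
qed

lemma LIMSEQ_if_norm_diff_le_enn2real:
  fixes x :: "nat \<Rightarrow> 'a::real_normed_vector" and k :: "nat \<Rightarrow> ennreal"
  assumes "k \<longlonglongrightarrow> 0" "\<And>n. k n < \<infinity> \<Longrightarrow> norm (x n - l) \<le> C * enn2real (k n)"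
  shows "x \<longlonglongrightarrow> l"
proof -
  have "eventually (\<lambda>n. k n < \<infinity>) sequentially"
    using assms(1) by (rule order_tendstoD) simp
  then have "eventually (\<lambda>n. norm (x n - l) \<le> C * enn2real (k n)) sequentially"
    by eventually_elim (rule assms(2))
  moreover have "(\<lambda>n. C * enn2real (k n)) \<longlonglongrightarrow> 0"
    using tendsto_enn2real[of k 0] assms(1) by (auto intro: tendsto_mult_right_zero)
  ultimately have "(\<lambda>n. x n - l) \<longlonglongrightarrow> 0"
    by (rule Lim_null_comparison)
  then show ?thesis
    by (rule LIM_zero_cancel)
qed

lemma borel_measurable_cis [measurable (raw)]:
  "f \<in> borel_measurable M \<Longrightarrow> (\<lambda>x. cis (f x)) \<in> borel_measurable M"
  by (rule measurable_compose[of f M borel cis])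
    (auto intro!: borel_measurable_continuous_onI continuous_intros)

lemma integrable_cis_mult:
  fixes f :: "'a \<Rightarrow> complex"
  assumes "integrable M f" "\<theta> \<in> borel_measurable M"
  shows "integrable M (\<lambda>x. cis (\<theta> x) * f x)"
  using assms by (intro Bochner_Integration.integrable_bound[OF assms(1)]) (auto simp: norm_mult)

lemma norm_integral_indicator_le:
  fixes h :: "'a \<Rightarrow> 'b::{banach, second_countable_topology}"
  assumes "A \<in> sets M" "emeasure M A < \<infinity>" "h \<in> borel_measurable M" "\<And>x. x \<in> A \<Longrightarrow> norm (h x) \<le> e"
  shows "norm (\<integral>x. indicator A x *\<^sub>R h x \<partial>M) \<le> e * measure M A"
proof -
  have "integrable M (\<lambda>x. indicator A x *\<^sub>R h x)"
    using assms by (intro integrableI_bounded_set_indicator) auto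
  have "norm (\<integral>x. indicator A x *\<^sub>R h x \<partial>M) \<le> (\<integral>x. norm (indicator A x *\<^sub>R h x) \<partial>M)"
    by (rule integral_norm_bound)
  also have "\<dots> \<le> (\<integral>x. indicator A x *\<^sub>R e \<partial>M)"
    using assms \<open>integrable M (\<lambda>x. indicator A x *\<^sub>R h x)\<close>
    by (intro integral_mono integrable_norm integrable_indicator) (auto simp: indicator_def)
  also have "\<dots> = e * measure M A"
    using assms by simp
  finally show ?thesis .
qed

lemma lborel_integral_translate:
  fixes c :: "'a::euclidean_space" and f :: "'a \<Rightarrow> 'b::{banach,second_countable_topology}"
  assumes "f \<in> borel_measurable borel"
  shows "(\<integral>x. f (x + c) \<partial>lborel) = integral\<^sup>L lborel f"
proof -
  have "integral\<^sup>L lborel f = integral\<^sup>L (distr lborel borel ((+) c)) f"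
    by (simp add: lborel_distr_plus)
  also have "\<dots> = (\<integral>x. f (x + c) \<partial>lborel)"
    using assms by (subst integral_distr) (auto simp: add.commute)
  finally show ?thesis ..
qed

lemma integrable_lborel_translate:
  fixes c :: "'a::euclidean_space" and f :: "'a \<Rightarrow> 'b::{banach,second_countable_topology}"
  assumes "integrable lborel f"
  shows "integrable lborel (\<lambda>x. f (x + c))"
proof -
  have "integrable (distr lborel borel ((+) c)) f"
    by (simp add: lborel_distr_plus assms)
  then show ?thesis
    using assms by (subst (asm) integrable_distr_eq) (auto simp: add.commute)
qed

lemma emeasure_lborel_ball_eq:
  fixes \<xi> :: "'a::euclidean_space"
  assumes "r \<ge> 0"
  shows "emeasure lborel (ball \<xi> r) = ennreal (measure lborel (ball (0::'a) r))"
  using assms by (simp add: emeasure_ball content_ball)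

lemma borel_measurable_pair_lborel_if_sets_borel:
  fixes f :: "'a::topological_space \<times> 'b::euclidean_space \<Rightarrow> 'c::topological_space"
  assumes "sets M = sets borel" "f \<in> borel_measurable (borel \<Otimes>\<^sub>M borel)"
  shows "f \<in> borel_measurable (M \<Otimes>\<^sub>M lborel)"
proof -
  have "sets (M \<Otimes>\<^sub>M lborel) = sets (borel \<Otimes>\<^sub>M (borel :: 'b measure))"
    using assms(1) by (intro sets_pair_measure_cong) auto
  then show ?thesis
    using assms(2) measurable_cong_sets by blast
qed

lemma pair_dist_less_sets_borel [measurable]:
  "{(\<xi>, t). dist t \<xi> < r} \<in> sets (borel \<Otimes>\<^sub>M (borel :: 'a::euclidean_space measure))"
  unfolding borel_prod case_prod_beta by (intro borel_open open_Collect_less continuous_intros)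

text \<open>Averaging over the balls \<open>ball t r\<close>, \<open>t \<in> \<real>\<^sup>d\<close>: every point is covered by a set of
  centres of volume \<open>|ball 0 r|\<close>.\<close>
lemma nn_integral_ball_average:
  fixes M :: "'a::euclidean_space measure" and g :: "'a \<Rightarrow> ennreal"
  assumes "sigma_finite_measure M" "sets M = sets borel" "g \<in> borel_measurable borel" "r \<ge> 0"
  shows "(\<integral>\<^sup>+t. (\<integral>\<^sup>+\<xi>. g \<xi> * indicator (ball t r) \<xi> \<partial>M) \<partial>lborel)
    = ennreal (measure lborel (ball (0::'a) r)) * (\<integral>\<^sup>+\<xi>. g \<xi> \<partial>M)"
proof -
  interpret M: sigma_finite_measure M by fact
  interpret pair_sigma_finite M lborel ..
  have [measurable]: "g \<in> borel_measurable borel"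
    by fact
  have "(\<lambda>(\<xi>, t). g \<xi> * indicator (ball t r) \<xi>) = (\<lambda>p. g (fst p) * indicator {(\<xi>, t). dist t \<xi> < r} p)"
    by (auto simp: fun_eq_iff indicator_def)
  also have "\<dots> \<in> borel_measurable (M \<Otimes>\<^sub>M lborel)"
    using assms(2) by (intro borel_measurable_pair_lborel_if_sets_borel) measurable
  finally have "(\<lambda>(\<xi>, t). g \<xi> * indicator (ball t r) \<xi>) \<in> borel_measurable (M \<Otimes>\<^sub>M lborel)" .
  then have "(\<integral>\<^sup>+t. (\<integral>\<^sup>+\<xi>. g \<xi> * indicator (ball t r) \<xi> \<partial>M) \<partial>lborel)
      = (\<integral>\<^sup>+\<xi>. (\<integral>\<^sup>+t. g \<xi> * indicator (ball t r) \<xi> \<partial>lborel) \<partial>M)"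
    by (rule Fubini')
  also have "\<dots> = (\<integral>\<^sup>+\<xi>. ennreal (measure lborel (ball (0::'a) r)) * g \<xi> \<partial>M)"
  proof (rule nn_integral_cong)
    fix \<xi> :: 'a
    have "(\<integral>\<^sup>+t. g \<xi> * indicator (ball t r) \<xi> \<partial>lborel) = (\<integral>\<^sup>+t. g \<xi> * indicator (ball \<xi> r) t \<partial>lborel)"
      by (intro nn_integral_cong) (simp add: indicator_def dist_commute)
    also have "\<dots> = g \<xi> * emeasure lborel (ball \<xi> r)"
      by (rule nn_integral_cmult_indicator) simp
    finally show "(\<integral>\<^sup>+t. g \<xi> * indicator (ball t r) \<xi> \<partial>lborel) = ennreal (measure lborel (ball (0::'a) r)) * g \<xi>"
      by (simp add: emeasure_lborel_ball_eq[OF assms(4)] mult.commute)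
  qed
  also have "\<dots> = ennreal (measure lborel (ball (0::'a) r)) * (\<integral>\<^sup>+\<xi>. g \<xi> \<partial>M)"
    using assms(3) by (intro nn_integral_cmult) (simp add: measurable_cong_sets[OF assms(2) refl])
  finally show ?thesis .
qed

lemma integrable_ball_kernel:
  fixes M :: "'a::euclidean_space measure" and f :: "'a \<Rightarrow> 'b::{banach, second_countable_topology}"
  assumes "sigma_finite_measure M" "sets M = sets borel" "integrable M f" "r \<ge> 0"
  shows "integrable (M \<Otimes>\<^sub>M lborel) (\<lambda>(\<xi>, t). indicator (ball t r) \<xi> *\<^sub>R f \<xi>)"
proof -
  interpret M: sigma_finite_measure M by fact
  interpret pair_sigma_finite M lborel ..
  define G where "G \<xi> t = indicator (ball t r) \<xi> *\<^sub>R f \<xi>" for \<xi> t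
  have [measurable]: "f \<in> borel_measurable borel"
    using borel_measurable_integrable[OF assms(3)] unfolding measurable_cong_sets[OF assms(2) refl] .
  have "(\<lambda>(\<xi>, t). G \<xi> t) = (\<lambda>p. indicator {(\<xi>, t). dist t \<xi> < r} p *\<^sub>R f (fst p))"
    by (auto simp: fun_eq_iff indicator_def G_def)
  also have "\<dots> \<in> borel_measurable (M \<Otimes>\<^sub>M lborel)"
    using assms(2) by (intro borel_measurable_pair_lborel_if_sets_borel) measurable
  finally have G_measurable: "(\<lambda>(\<xi>, t). G \<xi> t) \<in> borel_measurable (M \<Otimes>\<^sub>M lborel)" .
  then have norm_G: "(\<lambda>p. ennreal (norm (case p of (\<xi>, t) \<Rightarrow> G \<xi> t))) \<in> borel_measurable (M \<Otimes>\<^sub>M lborel)"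
    using measurable_compose[of _ _ borel "\<lambda>y. ennreal (norm y)"] by simp
  have "(\<integral>\<^sup>+p. ennreal (norm (case p of (\<xi>, t) \<Rightarrow> G \<xi> t)) \<partial>(M \<Otimes>\<^sub>M lborel))
      = (\<integral>\<^sup>+t. (\<integral>\<^sup>+\<xi>. ennreal (norm (f \<xi>)) * indicator (ball t r) \<xi> \<partial>M) \<partial>lborel)"
    by (subst nn_integral_snd[OF norm_G, symmetric]) (auto simp: G_def indicator_def intro!: nn_integral_cong)
  also have "\<dots> = ennreal (measure lborel (ball (0::'a) r)) * (\<integral>\<^sup>+\<xi>. norm (f \<xi>) \<partial>M)"
    using assms by (intro nn_integral_ball_average) auto
  also have "\<dots> < \<infinity>"
    using assms(3) by (simp add: integrable_iff_bounded ennreal_mult_less_top)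
  finally show ?thesis
    using G_measurable unfolding G_def by (intro integrableI_bounded)
qed

lemma integral_ball_average:
  fixes M :: "'a::euclidean_space measure" and f :: "'a \<Rightarrow> 'b::{banach, second_countable_topology}"
  assumes "sigma_finite_measure M" "sets M = sets borel" "integrable M f" "r \<ge> 0"
  shows "integrable lborel (\<lambda>t. \<integral>\<xi>. indicator (ball t r) \<xi> *\<^sub>R f \<xi> \<partial>M)"
    and "(\<integral>t. (\<integral>\<xi>. indicator (ball t r) \<xi> *\<^sub>R f \<xi> \<partial>M) \<partial>lborel)
      = measure lborel (ball (0::'a) r) *\<^sub>R integral\<^sup>L M f"
proof -
  interpret M: sigma_finite_measure M by fact
  interpret pair_sigma_finite M lborel ..
  note kernel = integrable_ball_kernel[OF assms]
  show "integrable lborel (\<lambda>t. \<integral>\<xi>. indicator (ball t r) \<xi> *\<^sub>R f \<xi> \<partial>M)"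
    using integrable_snd[OF kernel] .
  have "(\<integral>t. (\<integral>\<xi>. indicator (ball t r) \<xi> *\<^sub>R f \<xi> \<partial>M) \<partial>lborel)
      = (\<integral>\<xi>. (\<integral>t. indicator (ball t r) \<xi> *\<^sub>R f \<xi> \<partial>lborel) \<partial>M)"
    using kernel by (rule Fubini_integral)
  also have "\<dots> = (\<integral>\<xi>. measure lborel (ball (0::'a) r) *\<^sub>R f \<xi> \<partial>M)"
  proof (rule Bochner_Integration.integral_cong[OF refl])
    fix \<xi> :: 'a
    have "(\<integral>t. indicator (ball t r) \<xi> *\<^sub>R f \<xi> \<partial>lborel) = (\<integral>t. indicator (ball \<xi> r) t *\<^sub>R f \<xi> \<partial>lborel)"
      by (intro Bochner_Integration.integral_cong) (simp_all add: indicator_def dist_commute)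
    also have "\<dots> = measure lborel (ball (0::'a) r) *\<^sub>R f \<xi>"
      using emeasure_lborel_ball_eq[OF assms(4), of \<xi>] by (simp add: measure_def)
    finally show "(\<integral>t. indicator (ball t r) \<xi> *\<^sub>R f \<xi> \<partial>lborel) = measure lborel (ball (0::'a) r) *\<^sub>R f \<xi>" .
  qed
  finally show "(\<integral>t. (\<integral>\<xi>. indicator (ball t r) \<xi> *\<^sub>R f \<xi> \<partial>M) \<partial>lborel)
      = measure lborel (ball (0::'a) r) *\<^sub>R integral\<^sup>L M f"
    by simp
qed

subsection \<open>Polynomial weights\<close>

definition poly_weight :: "nat \<Rightarrow> 'a::real_normed_vector \<Rightarrow> real" where
  "poly_weight N x = inverse ((1 + norm x) ^ N)"

lemma poly_weight_pos: "poly_weight N x > 0"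
  unfolding poly_weight_def by (simp add: add_pos_nonneg)

lemma borel_measurable_poly_weight [measurable]: "poly_weight N \<in> borel_measurable borel"
  unfolding poly_weight_def by measurable

lemma le_mult_poly_weight_iff: "y \<le> A * poly_weight N x \<longleftrightarrow> (1 + norm x) ^ N * y \<le> A"
proof -
  have "(1 + norm x) ^ N > 0" by (simp add: add_pos_nonneg)
  then show ?thesis unfolding poly_weight_def by (simp add: field_simps)
qed

lemma poly_weight_shift:
  assumes "norm (x - y) \<le> r"
  shows "poly_weight N x \<le> (1 + r) ^ N * poly_weight N y"
proof -
  have "r \<ge> 0" using assms norm_ge_zero order_trans by blast
  have "norm y \<le> norm x + r"
    using assms norm_triangle_ineq2[of y x] norm_minus_commute[of x y] by linarith
  moreover have "0 \<le> r * norm x" using \<open>r \<ge> 0\<close> by simp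
  ultimately have "1 + norm y \<le> (1 + r) * (1 + norm x)"
    by (simp add: algebra_simps)
  then have "(1 + norm y) ^ N \<le> (1 + r) ^ N * (1 + norm x) ^ N"
    by (metis power_mono power_mult_distrib add_nonneg_nonneg norm_ge_zero zero_le_one)
  then show ?thesis
    by (simp add: le_mult_poly_weight_iff[where y = "poly_weight N x"] poly_weight_def field_simps
        add_pos_nonneg)
qed

lemma nonneg_if_le_mult_poly_weight:
  assumes "\<And>x. norm (f x) \<le> A * poly_weight N x"
  shows "A \<ge> 0"
  using assms[of 0] by (simp add: poly_weight_def) (meson norm_ge_zero order_trans)

lemma poly_weight_le_suminf_shells:
  "ennreal (poly_weight N x)
    \<le> (\<Sum>k. ennreal (inverse ((1 + real k) ^ N)) * indicator (cball 0 (real k + 1)) x)"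
proof -
  define k where "k = nat \<lfloor>norm x\<rfloor>"
  have "real k = of_int \<lfloor>norm x\<rfloor>"
    unfolding k_def by simp
  then have "real k \<le> norm x" "norm x \<le> real k + 1"
    by linarith+
  then have "poly_weight N x \<le> inverse ((1 + real k) ^ N)" "x \<in> cball 0 (real k + 1)"
    unfolding poly_weight_def by (auto intro!: le_imp_inverse_le power_mono simp: add_pos_nonneg)
  then have "ennreal (poly_weight N x) \<le> ennreal (inverse ((1 + real k) ^ N)) * indicator (cball 0 (real k + 1)) x"
    by (simp add: ennreal_leI)
  also have "\<dots> \<le> (\<Sum>k. ennreal (inverse ((1 + real k) ^ N)) * indicator (cball 0 (real k + 1)) x)"
    using sum_le_suminf[OF summableI, of "{k}" f for f :: "nat \<Rightarrow> ennreal"] by simp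
  finally show ?thesis .
qed

text \<open>On the shell \<open>k \<le> norm x < k + 1\<close> the weight is at most \<open>(1 + k)\<^sup>-\<^sup>N\<close>, while the
  volume of \<open>cball 0 (k + 1)\<close> grows like \<open>(k + 1)\<^sup>D\<^sup>I\<^sup>M\<close>.\<close>
lemma integrable_poly_weight:
  "integrable lborel (poly_weight (DIM('a) + 2) :: 'a::euclidean_space \<Rightarrow> real)"
proof -
  define N where "N = DIM('a) + 2"
  define c where "c = unit_ball_vol (real DIM('a))"
  define a where "a k = inverse ((1 + real k) ^ N)" for k :: nat
  define B where "B k = cball (0::'a) (real k + 1)" for k :: nat
  have "c > 0"
    unfolding c_def by (rule unit_ball_vol_pos) simp
  have ball_term: "ennreal (a k) * emeasure lborel (B k) = ennreal (c * inverse ((1 + real k) ^ 2))"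
    for k
  proof -
    have "a k * (c * (real k + 1) ^ DIM('a)) = c * inverse ((1 + real k) ^ 2)"
      by (simp add: a_def N_def power_add inverse_mult_distrib add.commute power2_eq_square)
    moreover have "emeasure lborel (B k) = ennreal (c * (real k + 1) ^ DIM('a))"
      unfolding B_def c_def by (rule emeasure_cball) simp
    ultimately show ?thesis
      using \<open>c > 0\<close> by (simp add: ennreal_mult'[symmetric] a_def)
  qed
  have summable: "summable (\<lambda>k. c * inverse ((1 + real k) ^ 2))"
    using summable_Suc_iff[of "\<lambda>n. inverse (real n ^ 2)"] inverse_power_summable[of 2, where 'a=real]
    by (intro summable_mult) (simp add: add.commute)
  have "(\<integral>\<^sup>+x. ennreal (poly_weight N x) \<partial>(lborel::'a measure))
      \<le> (\<integral>\<^sup>+x. (\<Sum>k. ennreal (a k) * indicator (B k) x) \<partial>lborel)"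
    unfolding a_def B_def by (intro nn_integral_mono poly_weight_le_suminf_shells)
  also have "\<dots> = (\<Sum>k. ennreal (a k) * emeasure lborel (B k))"
    by (subst nn_integral_suminf)
      (auto simp: B_def nn_integral_cmult_indicator
        intro!: borel_measurable_times_ennreal borel_measurable_indicator)
  also have "\<dots> = ennreal (\<Sum>k. c * inverse ((1 + real k) ^ 2))"
    unfolding ball_term using summable \<open>c > 0\<close> by (intro suminf_ennreal2) auto
  finally have "(\<integral>\<^sup>+x. ennreal (norm (poly_weight N x)) \<partial>(lborel::'a measure)) < \<infinity>"
    by (simp add: abs_of_pos[OF poly_weight_pos] le_less_trans)
  then show ?thesis
    unfolding N_def by (intro integrableI_bounded) auto
qed

lemma integrable_le_poly_weight:
  fixes f :: "'a::euclidean_space \<Rightarrow> 'b::{banach,second_countable_topology}"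
  assumes "f \<in> borel_measurable borel" "\<And>x. norm (f x) \<le> A * poly_weight (DIM('a) + 2) x"
  shows "integrable lborel f"
  using assms(2)
  by (intro Bochner_Integration.integrable_bound[OF integrable_mult_right[OF integrable_poly_weight]])
    (auto simp: assms(1) intro: order_trans[OF _ abs_ge_self])

lemma nn_integral_poly_weight_ball_le:
  fixes M :: "'a::real_normed_vector measure"
  assumes "ball t 1 \<in> sets M" "emeasure M (ball t 1) \<le> ennreal B" "B \<ge> 0"
  shows "(\<integral>\<^sup>+\<xi>. ennreal (poly_weight N \<xi>) * indicator (ball t 1) \<xi> \<partial>M)
    \<le> ennreal (2 ^ N * B) * ennreal (poly_weight N t)"
proof -
  have "(\<integral>\<^sup>+\<xi>. ennreal (poly_weight N \<xi>) * indicator (ball t 1) \<xi> \<partial>M)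
      \<le> (\<integral>\<^sup>+\<xi>. ennreal (2 ^ N * poly_weight N t) * indicator (ball t 1) \<xi> \<partial>M)"
    using poly_weight_shift[of _ t 1 N]
    by (intro nn_integral_mono) (auto simp: indicator_def dist_norm norm_minus_commute intro!: ennreal_leI)
  also have "\<dots> = ennreal (2 ^ N * poly_weight N t) * emeasure M (ball t 1)"
    using assms(1) by (rule nn_integral_cmult_indicator)
  also have "\<dots> \<le> ennreal (2 ^ N * poly_weight N t) * ennreal B"
    using assms(2) by (rule mult_left_mono) simp
  also have "\<dots> = ennreal (2 ^ N * B) * ennreal (poly_weight N t)"
    using assms(3) poly_weight_pos[of N t] by (simp add: ennreal_mult[symmetric] mult_ac)
  finally show ?thesis .
qed

subsection \<open>Schwartz functions and their Fourier transforms\<close>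

lemma dirderivs_append: "dirderivs ws (dirderivs vs \<phi>) = dirderivs (ws @ vs) \<phi>"
  by (induction ws) auto

lemma schwartz_dirderivs:
  assumes "schwartz \<phi>" "set vs \<subseteq> Basis"
  shows "schwartz (dirderivs vs \<phi>)"
  using assms unfolding schwartz_def dirderivs_append by auto

lemma schwartz_differentiable:
  assumes "schwartz \<phi>"
  shows "\<phi> differentiable at x"
  using assms unfolding schwartz_def by (metis dirderivs.simps(1) empty_set empty_subsetI)

lemma borel_measurable_schwartz:
  assumes "schwartz \<phi>"
  shows "\<phi> \<in> borel_measurable borel"
  using assms
  by (intro borel_measurable_continuous_onI continuous_at_imp_continuous_on ballI
      differentiable_imp_continuous_within schwartz_differentiable)

lemma schwartz_decay:
  assumes "schwartz \<phi>"
  obtains A where "\<And>x. norm (\<phi> x) \<le> A * poly_weight N x"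
proof -
  from assms obtain C0 CN where C0: "\<And>x. norm (\<phi> x) \<le> C0"
    and CN: "\<And>x. norm x ^ N * norm (\<phi> x) \<le> CN"
    unfolding schwartz_def by (metis dirderivs.simps(1) empty_set empty_subsetI power_0 mult_1)
  have "(1 + norm x) ^ N * norm (\<phi> x) \<le> 2 ^ N * (C0 + CN)" for x
  proof -
    have "(1 + norm x) ^ N * norm (\<phi> x) \<le> 2 ^ N * (1 + norm x ^ N) * norm (\<phi> x)"
      by (intro mult_right_mono one_plus_power_le) auto
    also have "\<dots> = 2 ^ N * (norm (\<phi> x) + norm x ^ N * norm (\<phi> x))"
      by (simp add: algebra_simps)
    also have "\<dots> \<le> 2 ^ N * (C0 + CN)"
      using C0 CN by (intro mult_left_mono add_mono) auto
    finally show ?thesis .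
  qed
  then show ?thesis using that le_mult_poly_weight_iff by blast
qed

lemma integrable_schwartz:
  fixes \<phi> :: "'a::euclidean_space \<Rightarrow> complex"
  assumes "schwartz \<phi>"
  shows "integrable lborel \<phi>"
proof -
  obtain A where "\<And>x. norm (\<phi> x) \<le> A * poly_weight (DIM('a) + 2) x"
    using schwartz_decay[OF assms, where N = "DIM('a) + 2"] by blast
  then show ?thesis
    using borel_measurable_schwartz[OF assms] by (intro integrable_le_poly_weight)
qed

lemma norm_fourier_le: "norm (fourier \<phi> \<xi>) \<le> (\<integral>x. norm (\<phi> x) \<partial>lborel)"
  unfolding fourier_def using integral_norm_bound[of lborel "\<lambda>x. cis (- 2 * pi * (x \<bullet> \<xi>)) * \<phi> x"]
  by (simp add: norm_mult)

lemma fourier_translate: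
  fixes \<phi> :: "'a::euclidean_space \<Rightarrow> complex"
  assumes [measurable]: "\<phi> \<in> borel_measurable borel"
  shows "fourier (\<lambda>x. \<phi> (x + c)) \<xi> = cis (2 * pi * (c \<bullet> \<xi>)) * fourier \<phi> \<xi>"
proof -
  define g where "g y = cis (2 * pi * (c \<bullet> \<xi>)) * (cis (- 2 * pi * (y \<bullet> \<xi>)) * \<phi> y)" for y
  have "g (x + c) = cis (- 2 * pi * (x \<bullet> \<xi>)) * \<phi> (x + c)" for x
    unfolding g_def mult.assoc[symmetric] cis_mult by (simp add: inner_add_left algebra_simps)
  then have "fourier (\<lambda>x. \<phi> (x + c)) \<xi> = (\<integral>x. g (x + c) \<partial>lborel)"
    unfolding fourier_def by simp
  also have "\<dots> = integral\<^sup>L lborel g"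
    by (rule lborel_integral_translate) (simp add: g_def)
  also have "\<dots> = cis (2 * pi * (c \<bullet> \<xi>)) * fourier \<phi> \<xi>"
    unfolding g_def fourier_def by simp
  finally show ?thesis .
qed

lemma difference_quotient_le_poly_weight:
  fixes \<phi> :: "'a::euclidean_space \<Rightarrow> 'b::real_normed_vector"
  assumes D: "\<And>y. (\<phi> has_derivative D y) (at y)"
    and bound: "\<And>y. norm (D y b) \<le> A * poly_weight N y"
    and "norm b \<le> 1" "0 < h" "h \<le> 1"
  shows "norm ((\<phi> (x + h *\<^sub>R b) - \<phi> x) /\<^sub>R h) \<le> 2 ^ N * A * poly_weight N x"
proof -
  have "A \<ge> 0" using bound by (rule nonneg_if_le_mult_poly_weight)
  define g where "g s = \<phi> (x + s *\<^sub>R b)" for s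
  have "(g has_vector_derivative D (x + s *\<^sub>R b) b) (at s within {0..h})" for s
    unfolding g_def by (rule has_vector_derivative_line[OF D])
  moreover have "norm (D (x + s *\<^sub>R b) b) \<le> 2 ^ N * A * poly_weight N x" if "s \<in> {0..h}" for s
  proof -
    have "norm (x + s *\<^sub>R b - x) \<le> 1"
      using that assms(3-5) by (auto intro: mult_le_one)
    then have "A * poly_weight N (x + s *\<^sub>R b) \<le> A * ((1 + 1) ^ N * poly_weight N x)"
      using \<open>A \<ge> 0\<close> by (intro mult_left_mono poly_weight_shift)
    then show ?thesis
      using bound[of "x + s *\<^sub>R b"] by (simp add: mult_ac)
  qed
  moreover have "onorm (\<lambda>u::real. u *\<^sub>R w) = norm w" for w :: 'b
    by (simp add: onorm_scaleR_left[OF bounded_linear_ident] onorm_id)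
  ultimately have "norm (g h - g 0) \<le> 2 ^ N * A * poly_weight N x * norm (h - 0)"
    using \<open>0 < h\<close> unfolding has_vector_derivative_def
    by (intro differentiable_bound[of "{0..h}"]) auto
  then show ?thesis
    using \<open>0 < h\<close> by (simp add: g_def divide_inverse_commute[symmetric] pos_divide_le_eq mult_ac)
qed

lemma fourier_difference_quotient:
  fixes \<phi> :: "'a::euclidean_space \<Rightarrow> complex"
  assumes "integrable lborel \<phi>"
  shows "fourier (\<lambda>x. (\<phi> (x + h *\<^sub>R b) - \<phi> x) /\<^sub>R h) \<xi>
    = ((cis (2 * pi * (b \<bullet> \<xi>) * h) - 1) /\<^sub>R h) * fourier \<phi> \<xi>"
proof -
  let ?e = "\<lambda>x. cis (- 2 * pi * (x \<bullet> \<xi>))"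
  have [measurable]: "\<phi> \<in> borel_measurable borel"
    using assms by auto
  have "integrable lborel (\<lambda>x. ?e x * \<phi> x)" "integrable lborel (\<lambda>x. ?e x * \<phi> (x + h *\<^sub>R b))"
    using assms integrable_lborel_translate[OF assms] by (auto intro!: integrable_cis_mult)
  then have "fourier (\<lambda>x. (\<phi> (x + h *\<^sub>R b) - \<phi> x) /\<^sub>R h) \<xi>
      = (fourier (\<lambda>x. \<phi> (x + h *\<^sub>R b)) \<xi> - fourier \<phi> \<xi>) /\<^sub>R h"
    unfolding fourier_def mult_scaleR_right right_diff_distrib by simp
  also have "\<dots> = ((cis (2 * pi * (b \<bullet> \<xi>) * h) - 1) /\<^sub>R h) * fourier \<phi> \<xi>"
    by (simp add: fourier_translate scaleR_conv_of_real algebra_simps)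
  finally show ?thesis .
qed

lemma fourier_dominated_convergence:
  fixes f :: "nat \<Rightarrow> 'a::euclidean_space \<Rightarrow> complex"
  assumes [measurable]: "\<And>k. f k \<in> borel_measurable borel"
    and "integrable lborel w" "\<And>k x. norm (f k x) \<le> w x" and "\<And>x. (\<lambda>k. f k x) \<longlonglongrightarrow> g x"
  shows "(\<lambda>k. fourier (f k) \<xi>) \<longlonglongrightarrow> fourier g \<xi>"
  unfolding fourier_def
proof (rule integral_dominated_convergence[where w = w])
  have [measurable]: "g \<in> borel_measurable borel"
    by (rule borel_measurable_LIMSEQ_metric[where f = f]) (simp_all add: assms(4))
  show "(\<lambda>x. cis (- 2 * pi * (x \<bullet> \<xi>)) * g x) \<in> borel_measurable lborel"
    by simp
  show "AE x in lborel. (\<lambda>k. cis (- 2 * pi * (x \<bullet> \<xi>)) * f k x) \<longlonglongrightarrow> cis (- 2 * pi * (x \<bullet> \<xi>)) * g x"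
    using assms(4) by (intro AE_I2 tendsto_mult_left)
  show "(\<lambda>x. cis (- 2 * pi * (x \<bullet> \<xi>)) * f k x) \<in> borel_measurable lborel" for k
    by simp
  show "AE x in lborel. norm (cis (- 2 * pi * (x \<bullet> \<xi>)) * f k x) \<le> w x" for k
    using assms(3) by (simp add: norm_mult)
qed (rule assms(2))

lemma fourier_difference_quotient_tendsto:
  fixes \<phi> :: "'a::euclidean_space \<Rightarrow> complex"
  assumes "schwartz \<phi>" "b \<in> Basis" "h \<longlonglongrightarrow> 0" "\<And>k. 0 < h k" "\<And>k. h k \<le> 1"
  shows "(\<lambda>k. fourier (\<lambda>x. (\<phi> (x + h k *\<^sub>R b) - \<phi> x) /\<^sub>R h k) \<xi>) \<longlonglongrightarrow> fourier (dirderivs [b] \<phi>) \<xi>"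
proof -
  define D where "D y = frechet_derivative \<phi> (at y)" for y
  have D: "(\<phi> has_derivative D y) (at y)" for y
    unfolding D_def using frechet_derivative_works schwartz_differentiable[OF assms(1)] by blast
  have "schwartz (dirderivs [b] \<phi>)"
    using assms by (intro schwartz_dirderivs) auto
  then obtain A where A: "\<And>y. norm (D y b) \<le> A * poly_weight (DIM('a) + 2) y"
    using schwartz_decay[where N = "DIM('a) + 2"] by (metis D_def dirderivs.simps)
  show ?thesis
  proof (rule fourier_dominated_convergence)
    show "(\<lambda>x. (\<phi> (x + h k *\<^sub>R b) - \<phi> x) /\<^sub>R h k) \<in> borel_measurable borel" for k
      using borel_measurable_schwartz[OF assms(1)] by measurable
    show "integrable lborel (\<lambda>x::'a. 2 ^ (DIM('a) + 2) * A * poly_weight (DIM('a) + 2) x)"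
      using integrable_poly_weight by (rule integrable_mult_right)
    show "norm ((\<phi> (x + h k *\<^sub>R b) - \<phi> x) /\<^sub>R h k) \<le> 2 ^ (DIM('a) + 2) * A * poly_weight (DIM('a) + 2) x"
      for k x
      using assms(2,4,5) by (intro difference_quotient_le_poly_weight[OF D A]) auto
    show "(\<lambda>k. (\<phi> (x + h k *\<^sub>R b) - \<phi> x) /\<^sub>R h k) \<longlonglongrightarrow> dirderivs [b] \<phi> x" for x
      using has_vector_derivative_imp_quotient_LIMSEQ[OF
          has_vector_derivative_line[where x = x and b = b and s = 0, OF D] assms(3)] assms(4)
      by (simp add: D_def less_imp_neq[symmetric])
  qed
qed

lemma fourier_dirderiv:
  fixes \<phi> :: "'a::euclidean_space \<Rightarrow> complex"
  assumes "schwartz \<phi>" and "b \<in> Basis"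
  shows "fourier (dirderivs [b] \<phi>) \<xi> = \<i> * of_real (2 * pi * (b \<bullet> \<xi>)) * fourier \<phi> \<xi>"
proof -
  define h where "h k = inverse (real (Suc k))" for k
  have h: "0 < h k" "h k \<le> 1" "h k \<noteq> 0" for k
    unfolding h_def by (auto simp: field_simps)
  have "h \<longlonglongrightarrow> 0"
    unfolding h_def by (rule LIMSEQ_inverse_real_of_nat)
  define q where "q k x = (\<phi> (x + h k *\<^sub>R b) - \<phi> x) /\<^sub>R h k" for k x
  have "(\<lambda>k. fourier (q k) \<xi>) \<longlonglongrightarrow> fourier (dirderivs [b] \<phi>) \<xi>"
    unfolding q_def using assms \<open>h \<longlonglongrightarrow> 0\<close> h by (intro fourier_difference_quotient_tendsto)
  moreover have "((\<lambda>s. cis (2 * pi * (b \<bullet> \<xi>) * s)) has_vector_derivative \<i> * of_real (2 * pi * (b \<bullet> \<xi>))) (at 0)"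
    unfolding has_vector_derivative_def
    by (auto intro!: derivative_eq_intros simp: scaleR_conv_of_real algebra_simps)
  from has_vector_derivative_imp_quotient_LIMSEQ[OF this \<open>h \<longlonglongrightarrow> 0\<close> h(3)]
  have "(\<lambda>k. fourier (q k) \<xi>) \<longlonglongrightarrow> \<i> * of_real (2 * pi * (b \<bullet> \<xi>)) * fourier \<phi> \<xi>"
    unfolding q_def fourier_difference_quotient[OF integrable_schwartz[OF assms(1)]]
    by (intro tendsto_mult_right) simp
  ultimately show ?thesis
    by (rule LIMSEQ_unique)
qed

lemma fourier_dirderivs_replicate:
  fixes \<phi> :: "'a::euclidean_space \<Rightarrow> complex"
  assumes "schwartz \<phi>" "b \<in> Basis"
  shows "fourier (dirderivs (replicate m b) \<phi>) \<xi> = (\<i> * of_real (2 * pi * (b \<bullet> \<xi>))) ^ m * fourier \<phi> \<xi>"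
proof (induction m)
  case (Suc m)
  have "schwartz (dirderivs (replicate m b) \<phi>)"
    using assms by (intro schwartz_dirderivs) auto
  then show ?case
    using fourier_dirderiv[OF _ assms(2)] Suc by simp
qed simp

lemma norm_fourier_mult_power_le:
  fixes \<phi> :: "'a::euclidean_space \<Rightarrow> complex"
  assumes "schwartz \<phi>" "b \<in> Basis"
  shows "(2 * pi * \<bar>b \<bullet> \<xi>\<bar>) ^ m * norm (fourier \<phi> \<xi>) \<le> (\<integral>x. norm (dirderivs (replicate m b) \<phi> x) \<partial>lborel)"
  using norm_fourier_le[of "dirderivs (replicate m b) \<phi>" \<xi>]
  by (simp add: fourier_dirderivs_replicate[OF assms] norm_mult norm_power)

lemma exists_Basis_norm_le_inner:
  fixes \<xi> :: "'a::euclidean_space"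
  obtains b where "b \<in> Basis" "norm \<xi> \<le> real DIM('a) * \<bar>\<xi> \<bullet> b\<bar>"
proof -
  define m where "m = Max ((\<lambda>b. \<bar>\<xi> \<bullet> b\<bar>) ` Basis)"
  have "m \<in> (\<lambda>b. \<bar>\<xi> \<bullet> b\<bar>) ` Basis"
    unfolding m_def by (intro Max_in) auto
  then obtain b where "b \<in> Basis" "m = \<bar>\<xi> \<bullet> b\<bar>"
    by blast
  have "norm \<xi> \<le> (\<Sum>b\<in>Basis. \<bar>\<xi> \<bullet> b\<bar>)"
    by (rule norm_le_l1)
  also have "\<dots> \<le> real DIM('a) * m"
    by (intro sum_bounded_above) (auto simp: m_def)
  finally show ?thesis
    using that \<open>b \<in> Basis\<close> \<open>m = \<bar>\<xi> \<bullet> b\<bar>\<close> by blast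
qed

text \<open>Each \<open>\<xi>\<close> has a coordinate \<open>b\<close> comparable to \<open>norm \<xi>\<close>, and differentiating \<open>N\<close> times in
  direction \<open>b\<close> produces the factor \<open>(2\<pi> (b \<bullet> \<xi>))\<^sup>N\<close> on the Fourier side.\<close>
lemma fourier_schwartz_decay:
  fixes \<phi> :: "'a::euclidean_space \<Rightarrow> complex"
  assumes "schwartz \<phi>"
  obtains A where "\<And>\<xi>. norm (fourier \<phi> \<xi>) \<le> A * poly_weight N \<xi>"
proof -
  define L where "L vs = (\<integral>x. norm (dirderivs vs \<phi> x) \<partial>lborel)" for vs
  define S where "S = (\<Sum>b\<in>Basis. L (replicate N b))"
  define D where "D = real DIM('a)"
  have "D \<ge> 1"
    unfolding D_def by simp
  have "(1 + norm \<xi>) ^ N * norm (fourier \<phi> \<xi>) \<le> (2 * D) ^ N * (L [] + S / (2 * pi) ^ N)" for \<xi>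
  proof -
    obtain b where b: "b \<in> Basis" "norm \<xi> \<le> D * \<bar>\<xi> \<bullet> b\<bar>"
      using exists_Basis_norm_le_inner unfolding D_def by blast
    define \<beta> where "\<beta> = \<bar>b \<bullet> \<xi>\<bar>"
    define F where "F = norm (fourier \<phi> \<xi>)"
    have "(2 * pi) ^ N * (\<beta> ^ N * F) \<le> L (replicate N b)"
      using norm_fourier_mult_power_le[OF assms b(1)]
      unfolding L_def \<beta>_def F_def by (simp add: power_mult_distrib mult_ac)
    also have "\<dots> \<le> S"
      unfolding S_def L_def using b(1) by (intro member_le_sum) auto
    finally have "\<beta> ^ N * F \<le> S / (2 * pi) ^ N"
      by (simp add: field_simps)
    moreover have "F \<le> L []"
      unfolding F_def L_def using norm_fourier_le[of \<phi> \<xi>] by simp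
    moreover have "(1 + norm \<xi>) ^ N \<le> (2 * D) ^ N * (1 + \<beta> ^ N)"
      using b(2) \<open>D \<ge> 1\<close> unfolding \<beta>_def by (intro one_plus_power_le_mult) (auto simp: inner_commute)
    ultimately have "(1 + norm \<xi>) ^ N * F \<le> (2 * D) ^ N * (1 + \<beta> ^ N) * F"
      by (intro mult_right_mono) (auto simp: F_def)
    also have "\<dots> = (2 * D) ^ N * (F + \<beta> ^ N * F)"
      by (simp add: algebra_simps)
    also have "\<dots> \<le> (2 * D) ^ N * (L [] + S / (2 * pi) ^ N)"
      using \<open>F \<le> L []\<close> \<open>\<beta> ^ N * F \<le> S / (2 * pi) ^ N\<close> \<open>D \<ge> 1\<close>
      by (intro mult_left_mono add_mono) auto
    finally show ?thesis
      unfolding F_def .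
  qed
  then show ?thesis
    using that le_mult_poly_weight_iff by blast
qed

lemma borel_measurable_fourier [measurable]:
  fixes \<phi> :: "'a::euclidean_space \<Rightarrow> complex"
  assumes "\<phi> \<in> borel_measurable borel"
  shows "fourier \<phi> \<in> borel_measurable borel"
proof -
  have "(\<lambda>(\<xi>, x). cis (- 2 * pi * (x \<bullet> \<xi>)) * \<phi> x) \<in> borel_measurable (borel \<Otimes>\<^sub>M lborel)"
    using assms by measurable
  then show ?thesis
    unfolding fourier_def[abs_def] by (rule lborel.borel_measurable_lebesgue_integral)
qed

subsection \<open>Translation bounded measures\<close>

lemma sets_translation_bounded_pos: "translation_bounded_pos M \<Longrightarrow> sets M = sets borel"
  unfolding translation_bounded_pos_def by simp

lemma translation_bounded_posD:
  "translation_bounded_pos M \<Longrightarrow> compact K \<Longrightarrow> (SUP t. emeasure M ((+) t ` K)) < \<infinity>"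
  unfolding translation_bounded_pos_def by blast

lemma borel_measurable_translation_bounded_pos:
  "translation_bounded_pos M \<Longrightarrow> borel_measurable M = borel_measurable borel"
  by (intro measurable_cong_sets sets_translation_bounded_pos refl)

lemma emeasure_translation_bounded_pos_less_top:
  assumes "translation_bounded_pos M" "compact S" "A \<subseteq> S"
  shows "emeasure M A < \<infinity>"
proof -
  have "emeasure M A \<le> emeasure M ((+) 0 ` S)"
    using assms by (intro emeasure_mono) (auto simp: sets_translation_bounded_pos borel_compact)
  also have "\<dots> \<le> (SUP t. emeasure M ((+) t ` S))"
    by (rule SUP_upper) simp
  also have "\<dots> < \<infinity>"
    using assms(1,2) by (rule translation_bounded_posD)
  finally show ?thesis .
qed

lemma translation_bounded_pos_ball_bound:
  assumes "translation_bounded_pos M"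
  obtains B where "B \<ge> 0" "\<And>t. emeasure M (ball t r) \<le> ennreal B"
proof -
  define S where "S = (SUP t. emeasure M ((+) t ` cball 0 r))"
  have "S < \<infinity>"
    unfolding S_def using assms compact_cball by (rule translation_bounded_posD)
  have "emeasure M (ball t r) \<le> S" for t
  proof -
    have "emeasure M (ball t r) \<le> emeasure M ((+) t ` cball 0 r)"
      using assms by (intro emeasure_mono) (auto simp: sets_translation_bounded_pos)
    also have "\<dots> \<le> S"
      unfolding S_def by (rule SUP_upper) simp
    finally show ?thesis .
  qed
  then show ?thesis
    using that[of "enn2real S"] \<open>S < \<infinity>\<close> by simp
qed

lemma sigma_finite_translation_bounded_pos:
  fixes M :: "'a::euclidean_space measure"
  assumes "translation_bounded_pos M"
  shows "sigma_finite_measure M"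
proof
  show "\<exists>A. countable A \<and> A \<subseteq> sets M \<and> \<Union> A = space M \<and> (\<forall>a\<in>A. emeasure M a \<noteq> \<infinity>)"
  proof (intro exI conjI ballI)
    show "range (\<lambda>n::nat. cball (0::'a) (real n)) \<subseteq> sets M"
      using assms by (auto simp: sets_translation_bounded_pos)
    show "\<Union> (range (\<lambda>n::nat. cball (0::'a) (real n))) = space M"
      using sets_eq_imp_space_eq[OF sets_translation_bounded_pos[OF assms]]
      by (auto simp: real_arch_simple)
    show "emeasure M a \<noteq> \<infinity>" if "a \<in> range (\<lambda>n::nat. cball (0::'a) (real n))" for a
    proof -
      from that obtain n where "a = cball 0 (real n)"
        by blast
      then show ?thesis
        using emeasure_translation_bounded_pos_less_top[OF assms compact_cball subset_refl, of 0 "real n"]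
        by simp
    qed
  qed simp
qed

lemma integrable_poly_weight_translation_bounded:
  fixes M :: "'a::euclidean_space measure"
  assumes "translation_bounded_pos M"
  shows "integrable M (poly_weight (DIM('a) + 2))"
proof -
  define N where "N = DIM('a) + 2"
  obtain B where "B \<ge> 0" and B: "\<And>t. emeasure M (ball t 1) \<le> ennreal B"
    using translation_bounded_pos_ball_bound[OF assms] by blast
  note tbp = sigma_finite_translation_bounded_pos[OF assms] sets_translation_bounded_pos[OF assms]
  have "ennreal (measure lborel (ball (0::'a) 1)) * (\<integral>\<^sup>+\<xi>. poly_weight N \<xi> \<partial>M)
      = (\<integral>\<^sup>+t. (\<integral>\<^sup>+\<xi>. ennreal (poly_weight N \<xi>) * indicator (ball t 1) \<xi> \<partial>M) \<partial>lborel)"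
    by (rule nn_integral_ball_average[OF tbp, symmetric]) simp_all
  also have "\<dots> \<le> (\<integral>\<^sup>+(t::'a). ennreal (2 ^ N * B) * ennreal (poly_weight N t) \<partial>lborel)"
    using B \<open>B \<ge> 0\<close> by (intro nn_integral_mono nn_integral_poly_weight_ball_le) (simp_all add: tbp(2))
  also have "\<dots> = ennreal (2 ^ N * B) * (\<integral>\<^sup>+(t::'a). ennreal (poly_weight N t) \<partial>lborel)"
    by (rule nn_integral_cmult) simp
  also have "\<dots> < \<infinity>"
    using integrable_poly_weight[where 'a = 'a] unfolding integrable_iff_bounded N_def
    by (simp add: abs_of_pos[OF poly_weight_pos] ennreal_mult_less_top)
  finally have "(\<integral>\<^sup>+\<xi>. ennreal (norm (poly_weight N \<xi>)) \<partial>M) < \<infinity>"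
    by (auto simp: ennreal_mult_less_top abs_of_pos[OF poly_weight_pos])
  then show ?thesis
    unfolding N_def
    by (intro integrableI_bounded) (simp_all add: borel_measurable_translation_bounded_pos[OF assms])
qed

lemma integrable_le_poly_weight_translation_bounded:
  fixes f :: "'a::euclidean_space \<Rightarrow> 'b::{banach, second_countable_topology}"
  assumes "translation_bounded_pos M" "f \<in> borel_measurable borel"
    and "\<And>x. norm (f x) \<le> A * poly_weight (DIM('a) + 2) x"
  shows "integrable M f"
  using assms(3)
  by (intro Bochner_Integration.integrable_bound[OF integrable_mult_right[OF
        integrable_poly_weight_translation_bounded[OF assms(1)]]])
    (auto simp: assms(2) borel_measurable_translation_bounded_pos[OF assms(1)]
      intro: order_trans[OF _ abs_ge_self])

definition cm_integrable :: "'a cmeasure \<Rightarrow> ('a \<Rightarrow> complex) \<Rightarrow> bool" where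
  "cm_integrable \<mu> f \<longleftrightarrow> integrable (cm_rp \<mu>) f \<and> integrable (cm_rn \<mu>) f
     \<and> integrable (cm_ip \<mu>) f \<and> integrable (cm_in \<mu>) f"

definition cm_mass :: "'a cmeasure \<Rightarrow> 'a set \<Rightarrow> real" where
  "cm_mass \<mu> A = measure (cm_rp \<mu>) A + measure (cm_rn \<mu>) A + measure (cm_ip \<mu>) A + measure (cm_in \<mu>) A"

lemma cm_integral_diff:
  assumes "cm_integrable \<mu> f" "cm_integrable \<mu> g"
  shows "cm_integral \<mu> (\<lambda>x. f x - g x) = cm_integral \<mu> f - cm_integral \<mu> g"
  using assms unfolding cm_integrable_def cm_integral_def by (simp add: algebra_simps)

lemma cm_integral_sum:
  assumes "finite V" "\<And>v. v \<in> V \<Longrightarrow> cm_integrable \<mu> (f v)"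
  shows "cm_integral \<mu> (\<lambda>x. \<Sum>v\<in>V. f v x) = (\<Sum>v\<in>V. cm_integral \<mu> (f v))"
  using assms unfolding cm_integrable_def cm_integral_def
  by (simp add: Bochner_Integration.integral_sum sum_subtractf sum_distrib_left sum.distrib
      right_diff_distrib)

lemma norm_cm_integral_le:
  "norm (cm_integral \<mu> f) \<le> norm (integral\<^sup>L (cm_rp \<mu>) f) + norm (integral\<^sup>L (cm_rn \<mu>) f)
     + norm (integral\<^sup>L (cm_ip \<mu>) f) + norm (integral\<^sup>L (cm_in \<mu>) f)"
proof -
  have "norm (cm_integral \<mu> f) \<le> norm (integral\<^sup>L (cm_rp \<mu>) f - integral\<^sup>L (cm_rn \<mu>) f)
      + norm (\<i> * (integral\<^sup>L (cm_ip \<mu>) f - integral\<^sup>L (cm_in \<mu>) f))"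
    unfolding cm_integral_def by (rule norm_triangle_ineq)
  then show ?thesis
    using norm_triangle_ineq4[of "integral\<^sup>L (cm_rp \<mu>) f" "integral\<^sup>L (cm_rn \<mu>) f"]
      norm_triangle_ineq4[of "integral\<^sup>L (cm_ip \<mu>) f" "integral\<^sup>L (cm_in \<mu>) f"]
    unfolding norm_mult by simp
qed

lemma cm_integrable_indicator:
  fixes \<mu> :: "'a::euclidean_space cmeasure"
  assumes "Minf \<mu>" "compact S" "A \<subseteq> S" "A \<in> sets borel" "h \<in> borel_measurable borel"
    and "\<And>x. x \<in> A \<Longrightarrow> norm (h x) \<le> e"
  shows "cm_integrable \<mu> (\<lambda>x. indicator A x *\<^sub>R h x)"
proof -
  have "integrable M (\<lambda>x. indicator A x *\<^sub>R h x)" if "translation_bounded_pos M" for M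
    using assms(2-6) emeasure_translation_bounded_pos_less_top[OF that assms(2,3)]
    by (intro integrableI_bounded_set_indicator)
      (auto simp: sets_translation_bounded_pos[OF that] borel_measurable_translation_bounded_pos[OF that])
  then show ?thesis
    using assms(1) unfolding cm_integrable_def Minf_def by blast
qed

lemma norm_cm_integral_indicator_le:
  fixes \<mu> :: "'a::euclidean_space cmeasure"
  assumes "Minf \<mu>" "compact S" "A \<subseteq> S" "A \<in> sets borel" "h \<in> borel_measurable borel"
    and "\<And>x. x \<in> A \<Longrightarrow> norm (h x) \<le> e"
  shows "norm (cm_integral \<mu> (\<lambda>x. indicator A x *\<^sub>R h x)) \<le> e * cm_mass \<mu> A"
proof -
  let ?I = "\<lambda>M. \<integral>x. indicator A x *\<^sub>R h x \<partial>M"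
  have part: "norm (?I M) \<le> e * measure M A" if "translation_bounded_pos M" for M
    using assms(2-6) emeasure_translation_bounded_pos_less_top[OF that assms(2,3)]
    by (intro norm_integral_indicator_le)
      (auto simp: sets_translation_bounded_pos[OF that] borel_measurable_translation_bounded_pos[OF that])
  have "norm (cm_integral \<mu> (\<lambda>x. indicator A x *\<^sub>R h x))
      \<le> norm (?I (cm_rp \<mu>)) + norm (?I (cm_rn \<mu>)) + norm (?I (cm_ip \<mu>)) + norm (?I (cm_in \<mu>))"
    by (rule norm_cm_integral_le)
  also have "\<dots> \<le> e * measure (cm_rp \<mu>) A + e * measure (cm_rn \<mu>) A
      + e * measure (cm_ip \<mu>) A + e * measure (cm_in \<mu>) A"
    using assms(1) unfolding Minf_def by (intro add_mono part) auto
  also have "\<dots> = e * cm_mass \<mu> A"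
    unfolding cm_mass_def by (simp add: algebra_simps)
  finally show ?thesis .
qed

lemma cm_integral_indicator_const:
  fixes \<mu> :: "'a::euclidean_space cmeasure"
  assumes "Minf \<mu>" "compact S" "A \<subseteq> S" "A \<in> sets borel"
  shows "cm_integral \<mu> (\<lambda>x. indicator A x *\<^sub>R v) = v * cm_val \<mu> A"
proof -
  have part: "(\<integral>x. indicator A x *\<^sub>R v \<partial>M) = measure M A *\<^sub>R v" if "translation_bounded_pos M" for M
    using assms(4) emeasure_translation_bounded_pos_less_top[OF that assms(2,3)]
    by (simp add: sets_translation_bounded_pos[OF that])
  show ?thesis
    using assms(1) unfolding Minf_def cm_integral_def cm_val_def
    by (simp only: part) (simp add: scaleR_conv_of_real algebra_simps)
qed

lemma cm_integral_ball_average: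
  fixes \<mu> :: "'a::euclidean_space cmeasure" and f :: "'a \<Rightarrow> complex"
  assumes "Minf \<mu>" "r \<ge> 0" "f \<in> borel_measurable borel"
    and "\<And>\<xi>. norm (f \<xi>) \<le> A * poly_weight (DIM('a) + 2) \<xi>"
  shows "integrable lborel (\<lambda>t. cm_integral \<mu> (\<lambda>\<xi>. indicator (ball t r) \<xi> *\<^sub>R f \<xi>))"
    and "(\<integral>t. cm_integral \<mu> (\<lambda>\<xi>. indicator (ball t r) \<xi> *\<^sub>R f \<xi>) \<partial>lborel)
      = measure lborel (ball (0::'a) r) *\<^sub>R cm_integral \<mu> f"
proof -
  have average: "integrable lborel (\<lambda>t. \<integral>\<xi>. indicator (ball t r) \<xi> *\<^sub>R f \<xi> \<partial>M)"
    "(\<integral>t. (\<integral>\<xi>. indicator (ball t r) \<xi> *\<^sub>R f \<xi> \<partial>M) \<partial>lborel) = measure lborel (ball (0::'a) r) *\<^sub>R integral\<^sup>L M f"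
    if "translation_bounded_pos M" for M
    using integral_ball_average[OF sigma_finite_translation_bounded_pos[OF that]
        sets_translation_bounded_pos[OF that] integrable_le_poly_weight_translation_bounded[OF that assms(3,4)]
        assms(2)] by auto
  have parts: "translation_bounded_pos (cm_rp \<mu>)" "translation_bounded_pos (cm_rn \<mu>)"
    "translation_bounded_pos (cm_ip \<mu>)" "translation_bounded_pos (cm_in \<mu>)"
    using assms(1) unfolding Minf_def by auto
  note averages = average[OF parts(1)] average[OF parts(2)] average[OF parts(3)] average[OF parts(4)]
  show "integrable lborel (\<lambda>t. cm_integral \<mu> (\<lambda>\<xi>. indicator (ball t r) \<xi> *\<^sub>R f \<xi>))"
    unfolding cm_integral_def using averages by auto
  show "(\<integral>t. cm_integral \<mu> (\<lambda>\<xi>. indicator (ball t r) \<xi> *\<^sub>R f \<xi>) \<partial>lborel)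
      = measure lborel (ball (0::'a) r) *\<^sub>R cm_integral \<mu> f"
    unfolding cm_integral_def using averages by (simp add: scaleR_conv_of_real algebra_simps)
qed

subsection \<open>Comparison with the total variation\<close>

lemma sum_norm_le_total_variation:
  assumes "S \<in> sets borel" "finite P" "P \<subseteq> sets borel" "disjoint P" "\<Union>P \<subseteq> S"
  shows "ennreal (\<Sum>p\<in>P. norm (\<nu> p)) \<le> total_variation \<nu> S"
proof -
  define Q where "Q = insert (S - \<Union>P) P"
  have "(\<Sum>p\<in>P. norm (\<nu> p)) \<le> (\<Sum>p\<in>Q. norm (\<nu> p))"
    unfolding Q_def using assms(2) by (intro sum_mono2) auto
  moreover have "finite Q \<and> Q \<subseteq> sets borel \<and> disjoint Q \<and> \<Union>Q = S"
    unfolding Q_def using assms by (auto simp: disjoint_def)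
  then have "ennreal (\<Sum>p\<in>Q. norm (\<nu> p)) \<le> total_variation \<nu> S"
    unfolding total_variation_def by (intro SUP_upper) simp
  ultimately show ?thesis
    by (meson ennreal_leI order_trans)
qed

lemma total_variation_le_K_norm: "total_variation \<nu> ((+) t ` K) \<le> K_norm K \<nu>"
  unfolding K_norm_def by (rule SUP_upper) simp

definition grid_round :: "real \<Rightarrow> complex \<Rightarrow> complex" where
  "grid_round \<epsilon> z = of_real \<epsilon> * (of_int \<lfloor>Re z / \<epsilon>\<rfloor> + \<i> * of_int \<lfloor>Im z / \<epsilon>\<rfloor>)"

lemma borel_measurable_grid_round [measurable]: "grid_round \<epsilon> \<in> borel_measurable borel"
  unfolding grid_round_def by measurable

lemma norm_diff_grid_round_le:
  assumes "\<epsilon> > 0"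
  shows "norm (z - grid_round \<epsilon> z) \<le> 2 * \<epsilon>"
proof -
  have "norm (z - grid_round \<epsilon> z) \<le> \<bar>Re (z - grid_round \<epsilon> z)\<bar> + \<bar>Im (z - grid_round \<epsilon> z)\<bar>"
    by (rule cmod_le)
  also have "\<dots> \<le> 2 * \<epsilon>"
    using abs_diff_floor_le[OF assms, of "Re z"] abs_diff_floor_le[OF assms, of "Im z"]
    by (simp add: grid_round_def)
  finally show ?thesis .
qed

lemma finite_grid_round_image:
  assumes "\<epsilon> > 0"
  shows "finite (grid_round \<epsilon> ` cball 0 c)"
proof -
  define K where "K = \<lceil>c / \<epsilon>\<rceil>"
  have floor_bound: "\<lfloor>y / \<epsilon>\<rfloor> \<in> {-K..K}" if "\<bar>y\<bar> \<le> c" for y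
  proof -
    have "\<bar>y / \<epsilon>\<bar> \<le> c / \<epsilon>"
      using that assms by (simp add: abs_divide divide_right_mono)
    then have "\<lfloor>y / \<epsilon>\<rfloor> \<le> \<lfloor>c / \<epsilon>\<rfloor>" "\<lfloor>- (c / \<epsilon>)\<rfloor> \<le> \<lfloor>y / \<epsilon>\<rfloor>"
      by (intro floor_mono; linarith)+
    then show ?thesis
      unfolding K_def using floor_le_ceiling[of "c / \<epsilon>"] by (simp add: ceiling_def)
  qed
  have "grid_round \<epsilon> ` cball 0 c
      \<subseteq> (\<lambda>(m, n). of_real \<epsilon> * (of_int m + \<i> * of_int n)) ` ({-K..K} \<times> {-K..K})"
  proof
    fix w assume "w \<in> grid_round \<epsilon> ` cball 0 c"
    then obtain z where "norm z \<le> c" "w = grid_round \<epsilon> z"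
      by auto
    then show "w \<in> (\<lambda>(m, n). of_real \<epsilon> * (of_int m + \<i> * of_int n)) ` ({-K..K} \<times> {-K..K})"
      using floor_bound[of "Re z"] floor_bound[of "Im z"] abs_Re_le_cmod[of z] abs_Im_le_cmod[of z]
      unfolding grid_round_def by (intro image_eqI[of _ _ "(\<lfloor>Re z / \<epsilon>\<rfloor>, \<lfloor>Im z / \<epsilon>\<rfloor>)"]) auto
  qed
  then show ?thesis
    by (rule finite_subset) simp
qed

lemma cm_integral_finite_range:
  fixes \<mu> :: "'a::euclidean_space cmeasure"
  assumes "Minf \<mu>" "compact S" "B \<subseteq> S" "B \<in> sets borel" "g \<in> borel_measurable borel"
    and "finite (g ` B)"
  shows "cm_integral \<mu> (\<lambda>x. indicator B x *\<^sub>R g x) = (\<Sum>v\<in>g ` B. v * cm_val \<mu> (B \<inter> g -` {v}))"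
proof -
  have level_sets: "B \<inter> g -` {v} \<in> sets borel" "B \<inter> g -` {v} \<subseteq> S" for v
    using measurable_sets[OF assms(5), of "{v}"] assms(3,4) by auto
  have "indicator B x *\<^sub>R g x = (\<Sum>v\<in>g ` B. indicator (B \<inter> g -` {v}) x *\<^sub>R v)" for x
  proof (cases "x \<in> B")
    case True
    have "(\<Sum>v\<in>g ` B. indicator (B \<inter> g -` {v}) x *\<^sub>R v) = (\<Sum>v\<in>g ` B. if v = g x then v else 0)"
      by (intro sum.cong) (auto simp: True indicator_def)
    also have "\<dots> = g x"
      using assms(6) True by (simp add: sum.delta)
    finally show ?thesis
      using True by simp
  qed simp
  then have "cm_integral \<mu> (\<lambda>x. indicator B x *\<^sub>R g x)
      = cm_integral \<mu> (\<lambda>x. \<Sum>v\<in>g ` B. indicator (B \<inter> g -` {v}) x *\<^sub>R v)"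
    by simp
  also have "\<dots> = (\<Sum>v\<in>g ` B. cm_integral \<mu> (\<lambda>x. indicator (B \<inter> g -` {v}) x *\<^sub>R v))"
    using assms(1,2,6) level_sets
    by (intro cm_integral_sum cm_integrable_indicator[where e = "norm _"]) auto
  also have "\<dots> = (\<Sum>v\<in>g ` B. v * cm_val \<mu> (B \<inter> g -` {v}))"
    using assms(1,2) level_sets by (intro sum.cong refl cm_integral_indicator_const)
  finally show ?thesis .
qed

lemma norm_cm_integral_diff_finite_range_le:
  fixes \<mu>a \<mu>b :: "'a::euclidean_space cmeasure"
  defines "\<nu> \<equiv> \<lambda>A. cm_val \<mu>a A - cm_val \<mu>b A"
  assumes "Minf \<mu>a" "Minf \<mu>b" "compact S" "B \<subseteq> S" "B \<in> sets borel" "g \<in> borel_measurable borel"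
    and "finite (g ` B)" "\<And>x. x \<in> B \<Longrightarrow> norm (g x) \<le> c" "c \<ge> 0" "total_variation \<nu> S < \<infinity>"
  shows "norm (cm_integral \<mu>a (\<lambda>x. indicator B x *\<^sub>R g x) - cm_integral \<mu>b (\<lambda>x. indicator B x *\<^sub>R g x))
    \<le> c * enn2real (total_variation \<nu> S)"
proof -
  define L where "L v = B \<inter> g -` {v}" for v
  have L: "L v \<in> sets borel" "L v \<subseteq> S" for v
    using measurable_sets[OF assms(7), of "{v}"] assms(5,6) by (auto simp: L_def)
  have "norm (cm_integral \<mu>a (\<lambda>x. indicator B x *\<^sub>R g x) - cm_integral \<mu>b (\<lambda>x. indicator B x *\<^sub>R g x))
      = norm (\<Sum>v\<in>g ` B. v * \<nu> (L v))"
    using assms(2-8) unfolding \<nu>_def L_def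
    by (simp add: cm_integral_finite_range sum_subtractf right_diff_distrib)
  also have "\<dots> \<le> (\<Sum>v\<in>g ` B. c * norm (\<nu> (L v)))"
    using assms(9) by (intro sum_norm_le) (auto simp: norm_mult intro: mult_right_mono)
  also have "\<dots> = c * (\<Sum>p\<in>L ` g ` B. norm (\<nu> p))"
  proof -
    have "inj_on L (g ` B)"
      by (rule inj_onI) (auto simp: L_def set_eq_iff)
    then show ?thesis
      by (simp add: sum.reindex sum_distrib_left)
  qed
  also have "\<dots> \<le> c * enn2real (total_variation \<nu> S)"
  proof -
    have sum_le: "ennreal (\<Sum>p\<in>L ` g ` B. norm (\<nu> p)) \<le> total_variation \<nu> S"
      using assms(4,8) L by (intro sum_norm_le_total_variation)
        (auto simp: borel_compact disjoint_def L_def)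
    show ?thesis
      using enn2real_mono[OF sum_le] assms(10,11) by (intro mult_left_mono) (simp_all add: sum_nonneg)
  qed
  finally show ?thesis .
qed

text \<open>Rounding \<open>f\<close> to the grid \<open>\<epsilon> (\<int> + \<i> \<int>)\<close> reduces to the finite range case at a cost
  of \<open>O(\<epsilon>)\<close>.\<close>
lemma norm_cm_integral_diff_le_total_variation:
  fixes \<mu>a \<mu>b :: "'a::euclidean_space cmeasure"
  defines "\<nu> \<equiv> \<lambda>A. cm_val \<mu>a A - cm_val \<mu>b A"
  assumes "Minf \<mu>a" "Minf \<mu>b" "compact S" "B \<subseteq> S" "B \<in> sets borel" "f \<in> borel_measurable borel"
    and "\<And>x. x \<in> B \<Longrightarrow> norm (f x) \<le> c" "c \<ge> 0" "total_variation \<nu> S < \<infinity>"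
  shows "norm (cm_integral \<mu>a (\<lambda>x. indicator B x *\<^sub>R f x) - cm_integral \<mu>b (\<lambda>x. indicator B x *\<^sub>R f x))
    \<le> c * enn2real (total_variation \<nu> S)"
proof (rule le_of_forall_pos_le_add_mult)
  fix \<epsilon> :: real
  assume "\<epsilon> > 0"
  define g where "g x = grid_round \<epsilon> (f x)" for x
  define T where "T = enn2real (total_variation \<nu> S)"
  let ?I = "\<lambda>\<mu> h. cm_integral \<mu> (\<lambda>x. indicator B x *\<^sub>R h x)"
  have [measurable]: "f \<in> borel_measurable borel" "g \<in> borel_measurable borel"
    using assms(7) unfolding g_def by measurable
  have g_close: "norm (f x - g x) \<le> 2 * \<epsilon>" for x
    unfolding g_def using norm_diff_grid_round_le[OF \<open>\<epsilon> > 0\<close>] by simp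
  have g_bound: "norm (g x) \<le> c + 2 * \<epsilon>" if "x \<in> B" for x
    using norm_triangle_ineq4[of "f x" "f x - g x"] g_close[of x] assms(8)[OF that] by simp
  have "g ` B \<subseteq> grid_round \<epsilon> ` cball 0 c"
    using assms(8) unfolding g_def by auto
  then have "finite (g ` B)"
    using finite_grid_round_image[OF \<open>\<epsilon> > 0\<close>] by (rule finite_subset)
  have close: "norm (?I \<mu> f - ?I \<mu> g) \<le> 2 * \<epsilon> * cm_mass \<mu> B" if "Minf \<mu>" for \<mu>
  proof -
    have "?I \<mu> f - ?I \<mu> g = cm_integral \<mu> (\<lambda>x. indicator B x *\<^sub>R (f x - g x))"
      using that assms(4-6) assms(8) g_bound
      by (subst cm_integral_diff[symmetric]) (auto intro!: cm_integrable_indicator simp: scaleR_diff_right)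
    then show ?thesis
      using that assms(4-6) g_close by (auto intro!: norm_cm_integral_indicator_le)
  qed
  have "norm (?I \<mu>a f - ?I \<mu>b f) \<le> norm (?I \<mu>a g - ?I \<mu>b g) + norm (?I \<mu>a f - ?I \<mu>a g) + norm (?I \<mu>b f - ?I \<mu>b g)"
    by (rule norm_diff_le_norm_diff_add)
  also have "\<dots> \<le> (c + 2 * \<epsilon>) * T + 2 * \<epsilon> * cm_mass \<mu>a B + 2 * \<epsilon> * cm_mass \<mu>b B"
    using norm_cm_integral_diff_finite_range_le[OF assms(2-6) _ \<open>finite (g ` B)\<close> g_bound]
      close[OF assms(2)] close[OF assms(3)] assms(9,10) \<open>\<epsilon> > 0\<close>
    unfolding T_def \<nu>_def by fastforce
  also have "\<dots> = c * T + \<epsilon> * (2 * T + 2 * cm_mass \<mu>a B + 2 * cm_mass \<mu>b B)"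
    by (simp add: algebra_simps)
  finally show "norm (?I \<mu>a f - ?I \<mu>b f) \<le> c * T + \<epsilon> * (2 * T + 2 * cm_mass \<mu>a B + 2 * cm_mass \<mu>b B)" .
qed

subsection \<open>Continuity with respect to \<open>K_norm K\<close>\<close>

lemma ball_subset_translation:
  fixes c0 :: "'a::real_normed_vector"
  assumes "ball c0 r \<subseteq> K"
  shows "ball t r \<subseteq> (+) (t - c0) ` K"
proof
  fix \<xi> assume "\<xi> \<in> ball t r"
  moreover have "dist c0 (\<xi> - t + c0) = dist t \<xi>"
    by (simp add: dist_norm algebra_simps)
  ultimately have "\<xi> - t + c0 \<in> K"
    using assms by auto
  then show "\<xi> \<in> (+) (t - c0) ` K"
    by (intro image_eqI[of _ _ "\<xi> - t + c0"]) auto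
qed

lemma norm_cm_integral_ball_diff_le_K_norm:
  fixes \<mu>a \<mu>b :: "'a::euclidean_space cmeasure"
  defines "\<nu> \<equiv> \<lambda>A. cm_val \<mu>a A - cm_val \<mu>b A"
  assumes "Minf \<mu>a" "Minf \<mu>b" "compact K" "ball c0 r \<subseteq> K" "r \<ge> 0" "f \<in> borel_measurable borel"
    and "\<And>\<xi>. norm (f \<xi>) \<le> A * poly_weight N \<xi>" "K_norm K \<nu> < \<infinity>"
  shows "norm (cm_integral \<mu>a (\<lambda>\<xi>. indicator (ball t r) \<xi> *\<^sub>R f \<xi>)
      - cm_integral \<mu>b (\<lambda>\<xi>. indicator (ball t r) \<xi> *\<^sub>R f \<xi>))
    \<le> A * (1 + r) ^ N * poly_weight N t * enn2real (K_norm K \<nu>)"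
proof -
  define S where "S = (+) (t - c0) ` K"
  have "A \<ge> 0"
    using assms(8) by (rule nonneg_if_le_mult_poly_weight)
  have TV: "total_variation \<nu> S \<le> K_norm K \<nu>"
    unfolding S_def by (rule total_variation_le_K_norm)
  have "norm (f \<xi>) \<le> A * (1 + r) ^ N * poly_weight N t" if "\<xi> \<in> ball t r" for \<xi>
  proof -
    have "poly_weight N \<xi> \<le> (1 + r) ^ N * poly_weight N t"
      using that by (intro poly_weight_shift) (simp add: dist_norm norm_minus_commute)
    then show ?thesis
      using assms(8)[of \<xi>] mult_left_mono[OF _ \<open>A \<ge> 0\<close>] by (fastforce simp: mult_ac)
  qed
  then have "norm (cm_integral \<mu>a (\<lambda>\<xi>. indicator (ball t r) \<xi> *\<^sub>R f \<xi>)
      - cm_integral \<mu>b (\<lambda>\<xi>. indicator (ball t r) \<xi> *\<^sub>R f \<xi>))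
    \<le> A * (1 + r) ^ N * poly_weight N t * enn2real (total_variation \<nu> S)"
    unfolding \<nu>_def
    using assms(2-7,9) TV ball_subset_translation[OF assms(5), of t] \<open>A \<ge> 0\<close> poly_weight_pos[of N t]
    by (intro norm_cm_integral_diff_le_total_variation)
      (auto simp: S_def \<nu>_def compact_translation less_imp_le intro: le_less_trans)
  also have "\<dots> \<le> A * (1 + r) ^ N * poly_weight N t * enn2real (K_norm K \<nu>)"
    using TV assms(6,9) \<open>A \<ge> 0\<close> poly_weight_pos[of N t]
    by (intro mult_left_mono enn2real_mono) (auto simp: less_imp_le)
  finally show ?thesis .
qed

lemma cm_integral_lipschitz_K_norm:
  fixes f :: "'a::euclidean_space \<Rightarrow> complex"
  assumes "compact K" "ball c0 r \<subseteq> K" "r > 0" "f \<in> borel_measurable borel"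
    and "\<And>\<xi>. norm (f \<xi>) \<le> A * poly_weight (DIM('a) + 2) \<xi>"
  obtains C where "\<And>\<mu>a \<mu>b. Minf \<mu>a \<Longrightarrow> Minf \<mu>b \<Longrightarrow> K_norm K (\<lambda>B. cm_val \<mu>a B - cm_val \<mu>b B) < \<infinity> \<Longrightarrow>
    norm (cm_integral \<mu>a f - cm_integral \<mu>b f) \<le> C * enn2real (K_norm K (\<lambda>B. cm_val \<mu>a B - cm_val \<mu>b B))"
proof
  define N where "N = DIM('a) + 2"
  define vol where "vol = measure lborel (ball (0::'a) r)"
  define W where "W = (\<integral>t. poly_weight N t \<partial>(lborel :: 'a measure))"
  have "vol > 0"
    unfolding vol_def using \<open>r > 0\<close> by (simp add: content_ball_gt_0_iff)
  fix \<mu>a \<mu>b :: "'a cmeasure"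
  define Kn where "Kn = enn2real (K_norm K (\<lambda>B. cm_val \<mu>a B - cm_val \<mu>b B))"
  define \<Phi> where "\<Phi> \<mu> t = cm_integral \<mu> (\<lambda>\<xi>. indicator (ball t r) \<xi> *\<^sub>R f \<xi>)" for \<mu> t
  assume "Minf \<mu>a" "Minf \<mu>b" "K_norm K (\<lambda>B. cm_val \<mu>a B - cm_val \<mu>b B) < \<infinity>"
  note average = cm_integral_ball_average[OF _ less_imp_le[OF \<open>r > 0\<close>] assms(4,5)]
  have "vol *\<^sub>R (cm_integral \<mu>a f - cm_integral \<mu>b f) = (\<integral>t. \<Phi> \<mu>a t - \<Phi> \<mu>b t \<partial>lborel)"
    using average[OF \<open>Minf \<mu>a\<close>] average[OF \<open>Minf \<mu>b\<close>]
    unfolding \<Phi>_def vol_def by (simp add: scaleR_diff_right)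
  then have "vol * norm (cm_integral \<mu>a f - cm_integral \<mu>b f) = norm (\<integral>t. \<Phi> \<mu>a t - \<Phi> \<mu>b t \<partial>lborel)"
    using \<open>vol > 0\<close> by (metis abs_of_pos norm_scaleR)
  also have "\<dots> \<le> (\<integral>(t::'a). A * (1 + r) ^ N * Kn * poly_weight N t \<partial>lborel)"
  proof (rule Bochner_Integration.integral_norm_bound_integral)
    show "integrable lborel (\<lambda>t. \<Phi> \<mu>a t - \<Phi> \<mu>b t)"
      using average[OF \<open>Minf \<mu>a\<close>] average[OF \<open>Minf \<mu>b\<close>] unfolding \<Phi>_def by auto
    show "integrable lborel (\<lambda>t::'a. A * (1 + r) ^ N * Kn * poly_weight N t)"
      unfolding N_def using integrable_poly_weight by (rule integrable_mult_right)
    show "norm (\<Phi> \<mu>a t - \<Phi> \<mu>b t) \<le> A * (1 + r) ^ N * Kn * poly_weight N t" for t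
      using norm_cm_integral_ball_diff_le_K_norm[OF \<open>Minf \<mu>a\<close> \<open>Minf \<mu>b\<close> assms(1,2) _ assms(4,5)]
        \<open>K_norm K _ < \<infinity>\<close> \<open>r > 0\<close>
      unfolding \<Phi>_def Kn_def N_def by (simp add: mult_ac)
  qed
  also have "\<dots> = vol * (A * (1 + r) ^ N * W / vol * Kn)"
    using \<open>vol > 0\<close> unfolding W_def by simp
  finally show "norm (cm_integral \<mu>a f - cm_integral \<mu>b f) \<le> A * (1 + r) ^ N * W / vol * Kn"
    using \<open>vol > 0\<close> by (simp add: pos_le_divide_eq mult.commute)
qed

lemma ft_pair_lipschitz_K_norm:
  fixes \<phi> :: "'a::euclidean_space \<Rightarrow> complex"
  assumes "schwartz \<phi>" "compact K" "ball c0 r \<subseteq> K" "r > 0"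
  obtains C where "\<And>\<mu>a \<mu>b. Minf \<mu>a \<Longrightarrow> Minf \<mu>b \<Longrightarrow> K_norm K (\<lambda>B. cm_val \<mu>a B - cm_val \<mu>b B) < \<infinity> \<Longrightarrow>
    norm (ft_pair \<mu>a \<phi> - ft_pair \<mu>b \<phi>) \<le> C * enn2real (K_norm K (\<lambda>B. cm_val \<mu>a B - cm_val \<mu>b B))"
proof -
  obtain A where "\<And>\<xi>. norm (fourier \<phi> \<xi>) \<le> A * poly_weight (DIM('a) + 2) \<xi>"
    using fourier_schwartz_decay[OF assms(1)] by blast
  from cm_integral_lipschitz_K_norm[OF assms(2-4) borel_measurable_fourier this]
  show ?thesis
    using that borel_measurable_schwartz[OF assms(1)] unfolding ft_pair_def by blast
qed

theorem proposition4p11: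
  fixes K :: "'a::euclidean_space set"
    and \<mu>s :: "nat \<Rightarrow> 'a cmeasure" and \<mu> :: "'a cmeasure"
  assumes "compact K" and "K \<noteq> {}" and "closure (interior K) = K"
    and "\<And>n. Minf (\<mu>s n)" and "Minf \<mu>"
    and "(\<lambda>n. K_norm K (\<lambda>A. cm_val (\<mu>s n) A - cm_val \<mu> A)) \<longlonglongrightarrow> 0"
  shows "\<forall>\<phi>. schwartz \<phi> \<longrightarrow> (\<lambda>n. ft_pair (\<mu>s n) \<phi>) \<longlonglongrightarrow> ft_pair \<mu> \<phi>"
proof (intro allI impI)
  fix \<phi> :: "'a \<Rightarrow> complex"
  assume "schwartz \<phi>"
  obtain c0 where "c0 \<in> interior K"
    using assms(2,3) by fastforce
  then obtain r where "r > 0" "ball c0 r \<subseteq> K"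
    by (meson mem_interior)
  obtain C where C: "\<And>\<mu>a \<mu>b. Minf \<mu>a \<Longrightarrow> Minf \<mu>b \<Longrightarrow> K_norm K (\<lambda>B. cm_val \<mu>a B - cm_val \<mu>b B) < \<infinity> \<Longrightarrow>
      norm (ft_pair \<mu>a \<phi> - ft_pair \<mu>b \<phi>) \<le> C * enn2real (K_norm K (\<lambda>B. cm_val \<mu>a B - cm_val \<mu>b B))"
    using ft_pair_lipschitz_K_norm[OF \<open>schwartz \<phi>\<close> assms(1) \<open>ball c0 r \<subseteq> K\<close> \<open>r > 0\<close>] by blast
  show "(\<lambda>n. ft_pair (\<mu>s n) \<phi>) \<longlonglongrightarrow> ft_pair \<mu> \<phi>"
    using assms(6) by (rule LIMSEQ_if_norm_diff_le_enn2real) (rule C[OF assms(4,5)])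
qed

end
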